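(* Let $\mu>0$, $\sigma>0$ with $\mu\ge\sqrt3\sigma$, and $\rho\in(0,1)$. Let $\omega$ be uniformly distributed on $\Omega=[\mu-\sqrt3\sigma,\mu+\sqrt3\sigma]$, let the real-time price be $p^{\omega,*}=\rho^{-1}\mathbf 1\{\omega\le\mu\}$ (faced by both participants), and let the electricity-market profits of the peaker plant $P$ (option seller) and wind producer $W$ (option buyer) be $$\pi_P^\omega=(\mu-\omega)^+(\rho^{-1}-1),\qquad \pi_W^\omega=\mu-(\mu-\omega)^+/\rho .$$ Let $\mathcal A_0=[0,1/\rho]\times[0,1/\rho]\times[0,\sqrt3\sigma]$, $\mathcal A_P=\{(q,K,\Delta)\in\mathcal A_0: K+2q\ge 1/\rho\}$ and $\mathcal A_W=\{(q,K,\Delta)\in\mathcal A_0:K+2q\le 1/\rho\}$. Consider the problem of minimizing $\mathrm{var}[\Pi_W^\omega]+\mathrm{var}[\Pi_P^\omega]$, where $$\Pi_W^\omega=\pi_W^\omega-q_W\Delta_W+(p^{\omega,*}-K_W)^+\Delta_W,\qquad \Pi_P^\omega=\pi_P^\omega+q_P\Delta_P-(p^{\omega,*}-K_P)^+\delta_P^\omega,$$ over $(q_W,K_W,\Delta_W)\in\mathcal A_W$, $(q_P,K_P,\Delta_P)\in\mathcal A_P$ and measurable $\delta_P:\Omega\to[0,\Delta_P]$, subject to $\Delta_P=\Delta_W$ and, almost surely, $\delta_P^\omega=\Delta_W\mathbf 1\{p^{\omega,*}\ge K_W\}$ and $$q_W\Delta_W-q_P\Delta_P-(p^{\omega,*}-K_W)^+\Delta_W+(p^{\omega,*}-K_P)^+\delta_P^\omega=0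 .$$ Then the optimal solutions are exactly those with $(q_W^*,K_W^*,\Delta_W^* )=(q_P^*,K_P^*,\Delta_P^* )=(q^*,K^*,\Delta^* )$ where $$\Delta^*\in\Big[\tfrac{\sqrt3\sigma(2-\rho)}{4},\ \sqrt3\sigma\Big],\qquad q^*=\frac{\sqrt3\sigma}{4\rho\Delta^*}-\frac{\sqrt3\sigma}{8\Delta^*},\qquad K^*=\frac1\rho\Big(\frac{2\Delta^*-\sqrt3\sigma}{2\Delta^*}\Big)+\frac{\sqrt3\sigma}{4\Delta^*}.$$ Moreover, $$\sum_{i\in\{W,P\}}\big(\mathrm{var}[\Pi_i^{\omega,*}]-\mathrm{var}[\pi_i^\omega]\big)=-\frac{3\sigma^2}{8}\Big(\rho^{-1}-\frac12\Big)^2<0 .$$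
   Context: $z^+:=\max\{z,0\}$; $\mathbf 1\{\cdot\}$ is an indicator. This is the centralized (market-maker) clearing of cash-settled call options (option price $q$, strike $K$, quantity $\Delta$, payoff $(p-K)^+$ per unit) between a wind producer and a peaker plant in a copperplate power system example (base-load generator with no ramping, peaker offering marginal cost $1/\rho$, zero-cost wind with available capacity $\omega$, demand $d\ge\mu+\sqrt3\sigma$), where both are risk-neutral; the acceptable sets $\mathcal A_P,\mathcal A_W$ are the risk-neutral acceptability sets in that example, and the last constraint says the market maker's merchandising surplus is zero in every scenario. *)

theory Defs
  imports "HOL-Probability.Probability"
begin

definition Omega :: "real \<Rightarrow> real \<Rightarrow> real set" where
  "Omega \<mu> \<sigma> = {\<mu> - sqrt 3 * \<sigma> .. \<mu> + sqrt 3 * \<sigma>}"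

definition unifM :: "real \<Rightarrow> real \<Rightarrow> real measure" where
  "unifM \<mu> \<sigma> = uniform_measure lborel (Omega \<mu> \<sigma>)"

definition var :: "real measure \<Rightarrow> (real \<Rightarrow> real) \<Rightarrow> real" where
  "var M X = (\<integral>x. (X x - (\<integral>y. X y \<partial>M))\<^sup>2 \<partial>M)"

definition price :: "real \<Rightarrow> real \<Rightarrow> real \<Rightarrow> real" where
  "price \<rho> \<mu> \<omega> = (if \<omega> \<le> \<mu> then 1 / \<rho> else 0)"

definition piP :: "real \<Rightarrow> real \<Rightarrow> real \<Rightarrow> real" where
  "piP \<rho> \<mu> \<omega> = max (\<mu> - \<omega>) 0 * (1 / \<rho> - 1)"

definition piW :: "real \<Rightarrow> real \<Rightarrow> real \<Rightarrow> real" where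
  "piW \<rho> \<mu> \<omega> = \<mu> - max (\<mu> - \<omega>) 0 / \<rho>"

definition A0 :: "real \<Rightarrow> real \<Rightarrow> (real \<times> real \<times> real) set" where
  "A0 \<rho> \<sigma> = {0 .. 1 / \<rho>} \<times> {0 .. 1 / \<rho>} \<times> {0 .. sqrt 3 * \<sigma>}"

definition AP :: "real \<Rightarrow> real \<Rightarrow> (real \<times> real \<times> real) set" where
  "AP \<rho> \<sigma> = {(q, K, \<Delta>) \<in> A0 \<rho> \<sigma>. K + 2 * q \<ge> 1 / \<rho>}"

definition AW :: "real \<Rightarrow> real \<Rightarrow> (real \<times> real \<times> real) set" where
  "AW \<rho> \<sigma> = {(q, K, \<Delta>) \<in> A0 \<rho> \<sigma>. K + 2 * q \<le> 1 / \<rho>}"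

definition PiW :: "real \<Rightarrow> real \<Rightarrow> real \<times> real \<times> real \<Rightarrow> real \<Rightarrow> real" where
  "PiW \<rho> \<mu> tW \<omega> = (case tW of (q, K, \<Delta>) \<Rightarrow>
     piW \<rho> \<mu> \<omega> - q * \<Delta> + max (price \<rho> \<mu> \<omega> - K) 0 * \<Delta>)"

definition PiP :: "real \<Rightarrow> real \<Rightarrow> real \<times> real \<times> real \<Rightarrow> (real \<Rightarrow> real) \<Rightarrow> real \<Rightarrow> real" where
  "PiP \<rho> \<mu> tP \<delta> \<omega> = (case tP of (q, K, \<Delta>) \<Rightarrow>
     piP \<rho> \<mu> \<omega> + q * \<Delta> - max (price \<rho> \<mu> \<omega> - K) 0 * \<delta> \<omega>)"

definition feasible :: "real \<Rightarrow> real \<Rightarrow> real \<Rightarrow> real \<times> real \<times> real \<Rightarrow> real \<times> real \<times> real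
    \<Rightarrow> (real \<Rightarrow> real) \<Rightarrow> bool" where
  "feasible \<rho> \<mu> \<sigma> tW tP \<delta> = (case tW of (qW, KW, \<Delta>W) \<Rightarrow> case tP of (qP, KP, \<Delta>P) \<Rightarrow>
     tW \<in> AW \<rho> \<sigma> \<and> tP \<in> AP \<rho> \<sigma> \<and>
     \<delta> \<in> borel_measurable (unifM \<mu> \<sigma>) \<and> (\<forall>\<omega>\<in>Omega \<mu> \<sigma>. 0 \<le> \<delta> \<omega> \<and> \<delta> \<omega> \<le> \<Delta>P) \<and>
     \<Delta>P = \<Delta>W \<and>
     (AE \<omega> in unifM \<mu> \<sigma>. \<delta> \<omega> = \<Delta>W * (if price \<rho> \<mu> \<omega> \<ge> KW then 1 else 0)) \<and>
     (AE \<omega> in unifM \<mu> \<sigma>. qW * \<Delta>W - qP * \<Delta>P - max (price \<rho> \<mu> \<omega> - KW) 0 * \<Delta>W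
                           + max (price \<rho> \<mu> \<omega> - KP) 0 * \<delta> \<omega> = 0))"

definition objective :: "real \<Rightarrow> real \<Rightarrow> real \<Rightarrow> real \<times> real \<times> real \<Rightarrow> real \<times> real \<times> real
    \<Rightarrow> (real \<Rightarrow> real) \<Rightarrow> real" where
  "objective \<rho> \<mu> \<sigma> tW tP \<delta> =
     var (unifM \<mu> \<sigma>) (PiW \<rho> \<mu> tW) + var (unifM \<mu> \<sigma>) (PiP \<rho> \<mu> tP \<delta>)"

definition optimal :: "real \<Rightarrow> real \<Rightarrow> real \<Rightarrow> real \<times> real \<times> real \<Rightarrow> real \<times> real \<times> real
    \<Rightarrow> (real \<Rightarrow> real) \<Rightarrow> bool" where
  "optimal \<rho> \<mu> \<sigma> tW tP \<delta> = (feasible \<rho> \<mu> \<sigma> tW tP \<delta> \<and>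
     (\<forall>tW' tP' \<delta>'. feasible \<rho> \<mu> \<sigma> tW' tP' \<delta>' \<longrightarrow>
        objective \<rho> \<mu> \<sigma> tW tP \<delta> \<le> objective \<rho> \<mu> \<sigma> tW' tP' \<delta>'))"

end

theory Submission
  imports Defs
begin

(*
  Write X = (mu - w)^+ for the wind shortfall and I = 1{w <= mu} for the scarcity event, in which
  the price spikes to 1/rho. On every feasible clearing both total profits are almost surely affine
  in X and I: the wind producer gains b I and the peaker loses b I, where b = (1/rho - K) Delta is
  the option payoff at the spike. Since E X = sqrt 3 sigma / 4, E I = 1/2 and X I = X, the total
  variance changes by b^2/2 - b b* with b* = (2/rho - 1) sqrt 3 sigma / 4, so the optimal clearings
  are exactly the feasible ones with b = b*, and they lower the variance by b*^2/2.
  The zero-surplus condition, read on both sides of mu, forces the two contracts to coincide; the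
  two acceptability sets then force K + 2 q = 1/rho, and b = 2 q Delta = b* leaves the
  one-parameter family in Delta.
*)

definition shortfall :: "real \<Rightarrow> real \<Rightarrow> real" where
  "shortfall \<mu> \<omega> = max (\<mu> - \<omega>) 0"

definition spike :: "real \<Rightarrow> real \<Rightarrow> real" where
  "spike \<mu> \<omega> = (if \<omega> \<le> \<mu> then 1 else 0)"

lemma shortfall_measurable [measurable]: "shortfall \<mu> \<in> borel_measurable borel"
  unfolding shortfall_def by measurable

lemma spike_measurable [measurable]: "spike \<mu> \<in> borel_measurable borel"
  unfolding spike_def by measurable

lemma emeasure_Omega: "\<sigma> \<ge> 0 \<Longrightarrow> emeasure lborel (Omega \<mu> \<sigma>) = ennreal (2 * sqrt 3 * \<sigma>)"
  unfolding Omega_def by simp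

lemma sets_unifM [measurable_cong]: "sets (unifM \<mu> \<sigma>) = sets borel"
  unfolding unifM_def by simp

lemma prob_space_unifM: "\<sigma> > 0 \<Longrightarrow> prob_space (unifM \<mu> \<sigma>)"
  unfolding unifM_def by (rule prob_space_uniform_measure) (auto simp: emeasure_Omega)

lemma AE_unifM_iff:
  "\<sigma> > 0 \<Longrightarrow> (AE x in unifM \<mu> \<sigma>. P x) \<longleftrightarrow> (AE x in lborel. x \<in> Omega \<mu> \<sigma> \<longrightarrow> P x)"
  unfolding unifM_def by (rule AE_uniform_measure) (auto simp: emeasure_Omega)

lemma AE_unifM_obtains_point:
  assumes "\<sigma> > 0" "AE x in unifM \<mu> \<sigma>. P x" "a < b" "{a<..<b} \<subseteq> Omega \<mu> \<sigma>"
  shows "\<exists>x\<in>{a<..<b}. P x"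
proof (rule ccontr)
  assume no_point: "\<not> (\<exists>x\<in>{a<..<b}. P x)"
  have "AE x in lborel. x \<in> Omega \<mu> \<sigma> \<longrightarrow> P x"
    using assms(1,2) by (simp add: AE_unifM_iff)
  then have "AE x in lborel. x \<notin> {a<..<b}"
    by eventually_elim (use no_point assms(4) in auto)
  then have "{a<..<b} \<in> null_sets lborel"
    by (simp add: AE_iff_null_sets)
  then have "emeasure lborel {a<..<b} = 0"
    by auto
  with \<open>a < b\<close> show False by simp
qed

lemma integral_unifM:
  assumes "\<sigma> > 0" "f \<in> borel_measurable borel"
  shows "integral\<^sup>L (unifM \<mu> \<sigma>) f
           = (\<integral>x. indicator (Omega \<mu> \<sigma>) x / (2 * sqrt 3 * \<sigma>) * f x \<partial>lborel)"
proof -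
  have "unifM \<mu> \<sigma> = density lborel (\<lambda>x. ennreal (indicator (Omega \<mu> \<sigma>) x / (2 * sqrt 3 * \<sigma>)))"
    using assms(1) unfolding unifM_def uniform_measure_def emeasure_Omega[OF less_imp_le[OF assms(1)]]
    by (intro arg_cong[where f = "density lborel"])
       (use divide_ennreal[of 1 "2 * sqrt 3 * \<sigma>"] in \<open>auto simp: fun_eq_iff split: split_indicator\<close>)
  then show ?thesis
    using assms by (simp add: integral_density Omega_def)
qed

lemma integrable_unifM_bounded:
  fixes C :: real
  assumes "\<sigma> > 0" "f \<in> borel_measurable borel" "\<And>x. x \<in> Omega \<mu> \<sigma> \<Longrightarrow> \<bar>f x\<bar> \<le> C"
  shows "integrable (unifM \<mu> \<sigma>) f"
proof -
  interpret prob_space "unifM \<mu> \<sigma>" using assms(1) by (rule prob_space_unifM)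
  show ?thesis
  proof (rule integrable_const_bound[where B = C])
    show "AE x in unifM \<mu> \<sigma>. norm (f x) \<le> C"
      using assms by (simp add: AE_unifM_iff)
    show "f \<in> borel_measurable (unifM \<mu> \<sigma>)"
      using assms(2) by (simp add: measurable_cong_sets[OF sets_unifM refl])
  qed
qed

lemma integral_unifM_lower_half:
  assumes "\<sigma> > 0" "f \<in> borel_measurable borel" "\<And>x. x > \<mu> \<Longrightarrow> f x = 0"
  shows "integral\<^sup>L (unifM \<mu> \<sigma>) f
           = (\<integral>x. indicator {\<mu> - sqrt 3 * \<sigma> .. \<mu>} x *\<^sub>R f x \<partial>lborel) / (2 * (sqrt 3 * \<sigma>))"
proof -
  have "integral\<^sup>L (unifM \<mu> \<sigma>) f
          = (\<integral>x. indicator {\<mu> - sqrt 3 * \<sigma> .. \<mu>} x *\<^sub>R f x / (2 * sqrt 3 * \<sigma>) \<partial>lborel)"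
    unfolding integral_unifM[OF assms(1,2)]
    using assms(3) by (intro Bochner_Integration.integral_cong) (auto simp: Omega_def indicator_def)
  then show ?thesis by simp
qed

lemma integral_unifM_shortfall:
  assumes "\<sigma> > 0"
  shows "integral\<^sup>L (unifM \<mu> \<sigma>) (shortfall \<mu>) = sqrt 3 * \<sigma> / 4"
proof -
  define s where "s = sqrt 3 * \<sigma>"
  have "s > 0" using assms by (simp add: s_def)
  have "integral\<^sup>L (unifM \<mu> \<sigma>) (shortfall \<mu>)
          = (\<integral>x. indicator {\<mu> - s .. \<mu>} x *\<^sub>R shortfall \<mu> x \<partial>lborel) / (2 * s)"
    unfolding s_def by (rule integral_unifM_lower_half[OF assms]) (auto simp: shortfall_def)
  also have "(\<integral>x. indicator {\<mu> - s .. \<mu>} x *\<^sub>R shortfall \<mu> x \<partial>lborel)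
               = (\<integral>x. indicator {\<mu> - s .. \<mu>} x *\<^sub>R (\<mu> - x) \<partial>lborel)"
    by (intro Bochner_Integration.integral_cong) (auto simp: shortfall_def indicator_def)
  also have "\<dots> = - (\<mu> - \<mu>)\<^sup>2 / 2 - (- (\<mu> - (\<mu> - s))\<^sup>2 / 2)"
    using \<open>s > 0\<close>
    by (intro integral_FTC_atLeastAtMost)
       (auto intro!: continuous_intros derivative_eq_intros
             simp: has_real_derivative_iff_has_vector_derivative[symmetric] power2_eq_square field_simps)
  also have "\<dots> / (2 * s) = s / 4"
    using \<open>s > 0\<close> by (simp add: power2_eq_square)
  finally show ?thesis by (simp add: s_def)
qed

lemma integral_unifM_spike:
  assumes "\<sigma> > 0"
  shows "integral\<^sup>L (unifM \<mu> \<sigma>) (spike \<mu>) = 1 / 2"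
proof -
  define s where "s = sqrt 3 * \<sigma>"
  have "s > 0" using assms by (simp add: s_def)
  have "integral\<^sup>L (unifM \<mu> \<sigma>) (spike \<mu>)
          = (\<integral>x. indicator {\<mu> - s .. \<mu>} x *\<^sub>R spike \<mu> x \<partial>lborel) / (2 * s)"
    unfolding s_def by (rule integral_unifM_lower_half[OF assms]) (auto simp: spike_def)
  also have "(\<integral>x. indicator {\<mu> - s .. \<mu>} x *\<^sub>R spike \<mu> x \<partial>lborel)
               = (\<integral>x. indicator {\<mu> - s .. \<mu>} x *\<^sub>R 1 \<partial>lborel)"
    by (intro Bochner_Integration.integral_cong) (auto simp: spike_def indicator_def)
  also have "\<dots> = \<mu> - (\<mu> - s)"
    using \<open>s > 0\<close>
    by (intro integral_FTC_atLeastAtMost)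
       (auto intro!: continuous_intros derivative_eq_intros
             simp: has_real_derivative_iff_has_vector_derivative[symmetric])
  also have "\<dots> / (2 * s) = 1 / 2"
    using \<open>s > 0\<close> by simp
  finally show ?thesis .
qed

lemma (in prob_space) variance_affine_combination:
  fixes X Y :: "'a \<Rightarrow> real"
  assumes [simp]: "integrable M X" "integrable M Y" "integrable M (\<lambda>x. (X x)\<^sup>2)"
    "integrable M (\<lambda>x. (Y x)\<^sup>2)" "integrable M (\<lambda>x. X x * Y x)"
  shows "variance (\<lambda>x. c + a * X x + b * Y x) = a\<^sup>2 * variance X + b\<^sup>2 * variance Y
           + 2 * a * b * (expectation (\<lambda>x. X x * Y x) - expectation X * expectation Y)"
proof -
  have square: "(\<lambda>x. (c + a * X x + b * Y x)\<^sup>2) = (\<lambda>x. c\<^sup>2 + 2 * c * a * X x + 2 * c * b * Y x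
      + a\<^sup>2 * (X x)\<^sup>2 + b\<^sup>2 * (Y x)\<^sup>2 + 2 * a * b * (X x * Y x))"
    by (simp add: fun_eq_iff power2_eq_square algebra_simps)
  have "integrable M (\<lambda>x. (c + a * X x + b * Y x)\<^sup>2)"
    unfolding square by simp
  then have variance_Z: "variance (\<lambda>x. c + a * X x + b * Y x)
      = expectation (\<lambda>x. (c + a * X x + b * Y x)\<^sup>2) - (expectation (\<lambda>x. c + a * X x + b * Y x))\<^sup>2"
    by (intro variance_eq) simp_all
  have second_moment_Z: "expectation (\<lambda>x. (c + a * X x + b * Y x)\<^sup>2) = c\<^sup>2 + 2 * c * a * expectation X
      + 2 * c * b * expectation Y + a\<^sup>2 * expectation (\<lambda>x. (X x)\<^sup>2)
      + b\<^sup>2 * expectation (\<lambda>x. (Y x)\<^sup>2) + 2 * a * b * expectation (\<lambda>x. X x * Y x)"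
    unfolding square by (simp add: prob_space)
  have mean_Z: "expectation (\<lambda>x. c + a * X x + b * Y x) = c + a * expectation X + b * expectation Y"
    by (simp add: prob_space)
  show ?thesis
    unfolding variance_Z
    unfolding second_moment_Z mean_Z variance_eq[OF assms(1,3)] variance_eq[OF assms(2,4)]
    by (simp add: power2_eq_square algebra_simps)
qed

lemma var_affine_shortfall_spike:
  assumes "\<sigma> > 0"
  shows "var (unifM \<mu> \<sigma>) (\<lambda>\<omega>. c + a * shortfall \<mu> \<omega> + b * spike \<mu> \<omega>)
           = a\<^sup>2 * var (unifM \<mu> \<sigma>) (shortfall \<mu>) + b\<^sup>2 / 4 + a * b * (sqrt 3 * \<sigma>) / 4"
proof -
  interpret prob_space "unifM \<mu> \<sigma>" using assms by (rule prob_space_unifM)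
  have shortfall_bounds: "0 \<le> shortfall \<mu> x" "shortfall \<mu> x \<le> sqrt 3 * \<sigma>" if "x \<in> Omega \<mu> \<sigma>" for x
    using that assms by (auto simp: shortfall_def Omega_def)
  have [simp]: "spike \<mu> x * spike \<mu> x = spike \<mu> x" "shortfall \<mu> x * spike \<mu> x = shortfall \<mu> x" for x
    by (auto simp: spike_def shortfall_def)
  have [simp]: "integrable (unifM \<mu> \<sigma>) (spike \<mu>)"
    using assms by (intro integrable_unifM_bounded[where C = 1]) (auto simp: spike_def)
  have [simp]: "integrable (unifM \<mu> \<sigma>) (shortfall \<mu>)"
    using assms shortfall_bounds by (intro integrable_unifM_bounded[where C = "sqrt 3 * \<sigma>"]) auto
  have "integrable (unifM \<mu> \<sigma>) (\<lambda>x. (shortfall \<mu> x)\<^sup>2)"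
    using assms shortfall_bounds
    by (intro integrable_unifM_bounded[where C = "(sqrt 3 * \<sigma>)\<^sup>2"]) (auto intro!: power_mono)
  then have "variance (\<lambda>\<omega>. c + a * shortfall \<mu> \<omega> + b * spike \<mu> \<omega>)
      = a\<^sup>2 * variance (shortfall \<mu>) + b\<^sup>2 * variance (spike \<mu>)
        + 2 * a * b * (expectation (\<lambda>\<omega>. shortfall \<mu> \<omega> * spike \<mu> \<omega>)
                       - expectation (shortfall \<mu>) * expectation (spike \<mu>))"
    by (intro variance_affine_combination) (simp_all add: power2_eq_square)
  moreover have "(spike \<mu> \<omega> - 1 / 2)\<^sup>2 = 1 / 4" for \<omega>
    by (simp add: spike_def power2_eq_square)
  ultimately show ?thesis
    unfolding var_def by (simp add: integral_unifM_shortfall integral_unifM_spike assms prob_space)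
qed

lemma var_cong_AE:
  assumes "f \<in> borel_measurable M" "g \<in> borel_measurable M" "AE x in M. f x = g x"
  shows "var M f = var M g"
proof -
  have "integral\<^sup>L M f = integral\<^sup>L M g"
    using assms by (rule integral_cong_AE)
  then show ?thesis
    unfolding var_def using assms by (intro integral_cong_AE) (auto elim: AE_mp)
qed

definition spike_payoff :: "real \<Rightarrow> real \<times> real \<times> real \<Rightarrow> real" where
  "spike_payoff \<rho> t = (case t of (q, K, \<Delta>) \<Rightarrow> (1 / \<rho> - K) * \<Delta>)"

definition optimal_spike_payoff :: "real \<Rightarrow> real \<Rightarrow> real" where
  "optimal_spike_payoff \<rho> \<sigma> = (2 / \<rho> - 1) * (sqrt 3 * \<sigma>) / 4"

definition optimal_contract :: "real \<Rightarrow> real \<Rightarrow> real \<Rightarrow> real \<times> real \<times> real" where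
  "optimal_contract \<rho> \<sigma> \<Delta> =
     (sqrt 3 * \<sigma> / (4 * \<rho> * \<Delta>) - sqrt 3 * \<sigma> / (8 * \<Delta>),
      (1 / \<rho>) * ((2 * \<Delta> - sqrt 3 * \<sigma>) / (2 * \<Delta>)) + sqrt 3 * \<sigma> / (4 * \<Delta>), \<Delta>)"

lemma PiW_eq_affine:
  assumes "0 \<le> K" "K \<le> 1 / \<rho>"
  shows "PiW \<rho> \<mu> (q, K, \<Delta>)
           = (\<lambda>\<omega>. (\<mu> - q * \<Delta>) + (- 1 / \<rho>) * shortfall \<mu> \<omega> + spike_payoff \<rho> (q, K, \<Delta>) * spike \<mu> \<omega>)"
  using assms
  by (auto simp: fun_eq_iff PiW_def piW_def price_def shortfall_def spike_def spike_payoff_def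
                 algebra_simps)

lemma PiP_AE_eq_affine:
  assumes "feasible \<rho> \<mu> \<sigma> (qW, KW, \<Delta>W) tP \<delta>"
  shows "AE \<omega> in unifM \<mu> \<sigma>. PiP \<rho> \<mu> tP \<delta> \<omega>
           = qW * \<Delta>W + (1 / \<rho> - 1) * shortfall \<mu> \<omega> + (- spike_payoff \<rho> (qW, KW, \<Delta>W)) * spike \<mu> \<omega>"
proof -
  obtain qP KP \<Delta>P where tP: "tP = (qP, KP, \<Delta>P)" by (cases tP)
  from assms have KW: "0 \<le> KW" "KW \<le> 1 / \<rho>"
    and zero_surplus: "AE \<omega> in unifM \<mu> \<sigma>. qW * \<Delta>W - qP * \<Delta>P - max (price \<rho> \<mu> \<omega> - KW) 0 * \<Delta>W
                                   + max (price \<rho> \<mu> \<omega> - KP) 0 * \<delta> \<omega> = 0"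
    unfolding feasible_def tP AW_def A0_def by auto
  from zero_surplus show ?thesis
    by eventually_elim
       (use KW in \<open>auto simp: tP PiP_def piP_def price_def shortfall_def spike_def spike_payoff_def
                              algebra_simps\<close>)
qed

lemma variance_change_feasible:
  assumes "\<sigma> > 0" "feasible \<rho> \<mu> \<sigma> tW tP \<delta>"
  shows "var (unifM \<mu> \<sigma>) (PiW \<rho> \<mu> tW) - var (unifM \<mu> \<sigma>) (piW \<rho> \<mu>)
           + (var (unifM \<mu> \<sigma>) (PiP \<rho> \<mu> tP \<delta>) - var (unifM \<mu> \<sigma>) (piP \<rho> \<mu>))
         = ((spike_payoff \<rho> tW - optimal_spike_payoff \<rho> \<sigma>)\<^sup>2 - (optimal_spike_payoff \<rho> \<sigma>)\<^sup>2) / 2"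
proof -
  obtain qW KW \<Delta>W where tW: "tW = (qW, KW, \<Delta>W)" by (cases tW)
  obtain qP KP \<Delta>P where tP: "tP = (qP, KP, \<Delta>P)" by (cases tP)
  define \<beta> where "\<beta> = spike_payoff \<rho> tW"
  from assms(2) have KW: "0 \<le> KW" "KW \<le> 1 / \<rho>" and [measurable]: "\<delta> \<in> borel_measurable (unifM \<mu> \<sigma>)"
    unfolding feasible_def tW tP AW_def A0_def by auto
  have affine_profits: "piW \<rho> \<mu> = (\<lambda>\<omega>. \<mu> + (- 1 / \<rho>) * shortfall \<mu> \<omega> + 0 * spike \<mu> \<omega>)"
    "piP \<rho> \<mu> = (\<lambda>\<omega>. 0 + (1 / \<rho> - 1) * shortfall \<mu> \<omega> + 0 * spike \<mu> \<omega>)"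
    by (auto simp: fun_eq_iff piW_def piP_def shortfall_def)
  have PiP_measurable: "PiP \<rho> \<mu> tP \<delta> \<in> borel_measurable (unifM \<mu> \<sigma>)"
    unfolding tP PiP_def piP_def price_def by measurable
  have var_PiP: "var (unifM \<mu> \<sigma>) (PiP \<rho> \<mu> tP \<delta>)
      = var (unifM \<mu> \<sigma>) (\<lambda>\<omega>. qW * \<Delta>W + (1 / \<rho> - 1) * shortfall \<mu> \<omega> + (- \<beta>) * spike \<mu> \<omega>)"
    using PiP_AE_eq_affine[OF assms(2)[unfolded tW]]
    unfolding \<beta>_def tW by (intro var_cong_AE[OF PiP_measurable]) simp_all
  have PiW_affine: "PiW \<rho> \<mu> tW = (\<lambda>\<omega>. (\<mu> - qW * \<Delta>W) + (- 1 / \<rho>) * shortfall \<mu> \<omega> + \<beta> * spike \<mu> \<omega>)"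
    unfolding tW \<beta>_def using KW by (rule PiW_eq_affine)
  show ?thesis
    unfolding \<beta>_def[symmetric] affine_profits var_PiP PiW_affine
      var_affine_shortfall_spike[OF assms(1)] optimal_spike_payoff_def
    by (simp add: power2_eq_square algebra_simps diff_divide_distrib add_divide_distrib)
qed

lemma AW_AP_iff:
  "(q, K, \<Delta>) \<in> AW \<rho> \<sigma> \<and> (q, K, \<Delta>) \<in> AP \<rho> \<sigma> \<longleftrightarrow> (q, K, \<Delta>) \<in> A0 \<rho> \<sigma> \<and> K + 2 * q = 1 / \<rho>"
  unfolding AW_def AP_def by auto

lemma ex_feasible_identical_contracts:
  assumes "t \<in> AW \<rho> \<sigma>" "t \<in> AP \<rho> \<sigma>"
  shows "\<exists>\<delta>. feasible \<rho> \<mu> \<sigma> t t \<delta>"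
proof -
  obtain q K \<Delta> where t: "t = (q, K, \<Delta>)" by (cases t)
  have "feasible \<rho> \<mu> \<sigma> t t (\<lambda>\<omega>. \<Delta> * (if K \<le> price \<rho> \<mu> \<omega> then 1 else 0))"
    using assms unfolding feasible_def AW_def A0_def t
    by (auto simp: price_def intro!: AE_I2)
  then show ?thesis by blast
qed

lemma optimal_spike_payoff_pos: "\<sigma> > 0 \<Longrightarrow> 0 < \<rho> \<Longrightarrow> \<rho> < 2 \<Longrightarrow> optimal_spike_payoff \<rho> \<sigma> > 0"
  by (simp add: optimal_spike_payoff_def field_simps)

lemma optimal_contract_spike_payoff:
  assumes "\<Delta> \<noteq> 0" "\<rho> \<noteq> 0"
  shows "spike_payoff \<rho> (optimal_contract \<rho> \<sigma> \<Delta>) = optimal_spike_payoff \<rho> \<sigma>"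
  using assms
  by (simp add: spike_payoff_def optimal_contract_def optimal_spike_payoff_def field_simps)

lemma optimal_contract_mem_AW_AP:
  assumes "\<sigma> > 0" "0 < \<rho>" "\<rho> < 2" "\<Delta> \<in> {sqrt 3 * \<sigma> * (2 - \<rho>) / 4 .. sqrt 3 * \<sigma>}"
  shows "optimal_contract \<rho> \<sigma> \<Delta> \<in> AW \<rho> \<sigma> \<and> optimal_contract \<rho> \<sigma> \<Delta> \<in> AP \<rho> \<sigma>"
proof -
  define s where "s = sqrt 3 * \<sigma>"
  define q where "q = (2 / \<rho> - 1) * s / (8 * \<Delta>)"
  have \<Delta>: "s * (2 - \<rho>) / 4 \<le> \<Delta>" "\<Delta> \<le> s" using assms(4) by (auto simp: s_def)
  have "s * (2 - \<rho>) / 4 > 0" using assms(1-3) by (simp add: s_def)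
  then have "\<Delta> > 0" using \<Delta> by linarith
  have contract: "optimal_contract \<rho> \<sigma> \<Delta> = (q, 1 / \<rho> - 2 * q, \<Delta>)"
    using \<open>\<Delta> > 0\<close> assms(2)
    by (simp add: optimal_contract_def q_def s_def field_simps)
  have "q \<ge> 0" using assms(2,3) \<open>\<Delta> > 0\<close> \<open>s * (2 - \<rho>) / 4 > 0\<close>
    by (simp add: q_def s_def[symmetric] field_simps)
  have "\<rho> * ((2 - \<rho>) * s) \<le> \<rho> * (4 * \<Delta>)"
    using \<Delta>(1) assms(2) by (intro mult_left_mono) (auto simp: algebra_simps)
  then have "2 * q \<le> 1 / \<rho>"
    using \<open>\<Delta> > 0\<close> assms(2) by (simp add: q_def field_simps)
  with \<open>q \<ge> 0\<close> show ?thesis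
    unfolding contract AW_AP_iff[unfolded A0_def] using \<Delta> \<open>\<Delta> > 0\<close> assms(2)
    by (simp add: s_def)
qed

lemma feasible_zero_surplus_identical_contracts:
  assumes "\<sigma> > 0" "feasible \<rho> \<mu> \<sigma> (qW, KW, \<Delta>W) tP \<delta>" "\<Delta>W \<noteq> 0"
  shows "tP = (qW, KW, \<Delta>W)"
proof -
  obtain qP KP \<Delta>P where tP: "tP = (qP, KP, \<Delta>P)" by (cases tP)
  from assms(2) have K: "0 \<le> KW" "KW \<le> 1 / \<rho>" "0 \<le> KP" "KP \<le> 1 / \<rho>" and "\<Delta>P = \<Delta>W"
    and exercise: "AE \<omega> in unifM \<mu> \<sigma>. \<delta> \<omega> = \<Delta>W * (if price \<rho> \<mu> \<omega> \<ge> KW then 1 else 0)"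
    and zero_surplus: "AE \<omega> in unifM \<mu> \<sigma>. qW * \<Delta>W - qP * \<Delta>P - max (price \<rho> \<mu> \<omega> - KW) 0 * \<Delta>W
                           + max (price \<rho> \<mu> \<omega> - KP) 0 * \<delta> \<omega> = 0"
    unfolding feasible_def tP AW_def AP_def A0_def by auto
  have clearing: "AE \<omega> in unifM \<mu> \<sigma>. \<delta> \<omega> = \<Delta>W * (if price \<rho> \<mu> \<omega> \<ge> KW then 1 else 0) \<and>
      (qW - qP) * \<Delta>W - max (price \<rho> \<mu> \<omega> - KW) 0 * \<Delta>W + max (price \<rho> \<mu> \<omega> - KP) 0 * \<delta> \<omega> = 0"
    using exercise zero_surplus by eventually_elim (simp add: \<open>\<Delta>P = \<Delta>W\<close> algebra_simps)
  have "sqrt 3 * \<sigma> > 0" using assms(1) by simp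
  then have above: "{\<mu> <..< \<mu> + sqrt 3 * \<sigma>} \<subseteq> Omega \<mu> \<sigma>"
    and below: "{\<mu> - sqrt 3 * \<sigma> <..< \<mu>} \<subseteq> Omega \<mu> \<sigma>"
    by (auto simp: Omega_def)
  \<comment> \<open>Above the mean no option is in the money, below it both are: this pins down q and K.\<close>
  obtain x where x: "\<mu> < x"
    "(qW - qP) * \<Delta>W - max (price \<rho> \<mu> x - KW) 0 * \<Delta>W + max (price \<rho> \<mu> x - KP) 0 * \<delta> x = 0"
    using AE_unifM_obtains_point[OF assms(1) clearing _ above] \<open>sqrt 3 * \<sigma> > 0\<close> by auto
  obtain y where y: "y < \<mu>" "\<delta> y = \<Delta>W * (if price \<rho> \<mu> y \<ge> KW then 1 else 0)"
    "(qW - qP) * \<Delta>W - max (price \<rho> \<mu> y - KW) 0 * \<Delta>W + max (price \<rho> \<mu> y - KP) 0 * \<delta> y = 0"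
    using AE_unifM_obtains_point[OF assms(1) clearing _ below] \<open>sqrt 3 * \<sigma> > 0\<close> by auto
  have "(qW - qP) * \<Delta>W = 0"
    using x K by (auto simp: price_def)
  moreover have "(qW - qP) * \<Delta>W + (KW - KP) * \<Delta>W = 0"
    using y K by (auto simp: price_def algebra_simps)
  ultimately show ?thesis
    using assms(3) \<open>\<Delta>P = \<Delta>W\<close> by (simp add: tP)
qed

lemma optimal_contract_unique:
  assumes "\<sigma> > 0" "0 < \<rho>" "\<rho> < 2" "(q, K, \<Delta>) \<in> AW \<rho> \<sigma>" "(q, K, \<Delta>) \<in> AP \<rho> \<sigma>"
    and "spike_payoff \<rho> (q, K, \<Delta>) = optimal_spike_payoff \<rho> \<sigma>"
  shows "\<Delta> \<in> {sqrt 3 * \<sigma> * (2 - \<rho>) / 4 .. sqrt 3 * \<sigma>} \<and> (q, K, \<Delta>) = optimal_contract \<rho> \<sigma> \<Delta>"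
proof -
  have A0: "0 \<le> K" "0 \<le> \<Delta>" "\<Delta> \<le> sqrt 3 * \<sigma>" and K: "K = 1 / \<rho> - 2 * q"
    using assms(4,5) AW_AP_iff[of q K \<Delta> \<rho> \<sigma>] unfolding A0_def by auto
  have payoff: "2 * q * \<Delta> = optimal_spike_payoff \<rho> \<sigma>"
    using assms(6) by (simp add: spike_payoff_def K)
  then have "\<Delta> \<noteq> 0"
    using optimal_spike_payoff_pos[OF assms(1-3)] by auto
  with A0(2) have "\<Delta> > 0" by simp
  have "\<rho> * optimal_spike_payoff \<rho> \<sigma> \<le> \<Delta>"
    using A0(1) \<open>\<Delta> > 0\<close> assms(2) unfolding payoff[symmetric] K
    by (simp add: field_simps)
  moreover have "\<rho> * optimal_spike_payoff \<rho> \<sigma> = sqrt 3 * \<sigma> * (2 - \<rho>) / 4"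
    using assms(2) by (simp add: optimal_spike_payoff_def field_simps)
  ultimately have lower: "sqrt 3 * \<sigma> * (2 - \<rho>) / 4 \<le> \<Delta>"
    by simp
  have q: "q = optimal_spike_payoff \<rho> \<sigma> / (2 * \<Delta>)"
    using payoff \<open>\<Delta> > 0\<close> by (simp add: field_simps)
  have "(q, K, \<Delta>) = optimal_contract \<rho> \<sigma> \<Delta>"
    unfolding K q optimal_contract_def optimal_spike_payoff_def
    using \<open>\<Delta> > 0\<close> assms(2) by (simp add: field_simps)
  with lower A0(3) show ?thesis
    by simp
qed

lemma feasible_optimal_spike_payoff_iff:
  assumes "\<sigma> > 0" "0 < \<rho>" "\<rho> < 2" "feasible \<rho> \<mu> \<sigma> tW tP \<delta>"
  shows "spike_payoff \<rho> tW = optimal_spike_payoff \<rho> \<sigma>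
     \<longleftrightarrow> (\<exists>\<Delta>\<in>{sqrt 3 * \<sigma> * (2 - \<rho>) / 4 .. sqrt 3 * \<sigma>}. tW = optimal_contract \<rho> \<sigma> \<Delta> \<and> tP = tW)"
    (is "_ \<longleftrightarrow> ?contract")
proof
  obtain q K \<Delta> where tW: "tW = (q, K, \<Delta>)" by (cases tW)
  assume payoff: "spike_payoff \<rho> tW = optimal_spike_payoff \<rho> \<sigma>"
  then have "\<Delta> \<noteq> 0"
    using optimal_spike_payoff_pos[OF assms(1-3)] by (auto simp: tW spike_payoff_def)
  then have "tP = tW"
    using feasible_zero_surplus_identical_contracts[OF assms(1) assms(4)[unfolded tW]] tW by simp
  with assms(4) have "(q, K, \<Delta>) \<in> AW \<rho> \<sigma>" "(q, K, \<Delta>) \<in> AP \<rho> \<sigma>"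
    by (simp_all add: feasible_def tW)
  with optimal_contract_unique[OF assms(1-3)] payoff \<open>tP = tW\<close> show ?contract
    unfolding tW by blast
next
  assume ?contract
  then obtain \<Delta> where "\<Delta> \<ge> sqrt 3 * \<sigma> * (2 - \<rho>) / 4" "tW = optimal_contract \<rho> \<sigma> \<Delta>"
    by auto
  moreover have "sqrt 3 * \<sigma> * (2 - \<rho>) / 4 > 0"
    using assms(1,3) by simp
  ultimately show "spike_payoff \<rho> tW = optimal_spike_payoff \<rho> \<sigma>"
    using optimal_contract_spike_payoff assms(2) by simp
qed

lemma optimal_iff_optimal_spike_payoff:
  assumes "\<sigma> > 0" "0 < \<rho>" "\<rho> < 2"
  shows "optimal \<rho> \<mu> \<sigma> tW tP \<delta>
           \<longleftrightarrow> feasible \<rho> \<mu> \<sigma> tW tP \<delta> \<and> spike_payoff \<rho> tW = optimal_spike_payoff \<rho> \<sigma>"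
proof -
  define \<beta> where "\<beta> = optimal_spike_payoff \<rho> \<sigma>"
  define V where "V = var (unifM \<mu> \<sigma>) (piW \<rho> \<mu>) + var (unifM \<mu> \<sigma>) (piP \<rho> \<mu>)"
  have objective: "objective \<rho> \<mu> \<sigma> tW' tP' \<delta>' = V + ((spike_payoff \<rho> tW' - \<beta>)\<^sup>2 - \<beta>\<^sup>2) / 2"
    if "feasible \<rho> \<mu> \<sigma> tW' tP' \<delta>'" for tW' tP' \<delta>'
    using variance_change_feasible[OF assms(1) that] unfolding objective_def V_def \<beta>_def by linarith
  have "sqrt 3 * \<sigma> \<in> {sqrt 3 * \<sigma> * (2 - \<rho>) / 4 .. sqrt 3 * \<sigma>}"
    using assms by simp
  then obtain \<delta>\<^sub>0 where feasible\<^sub>0: "feasible \<rho> \<mu> \<sigma> (optimal_contract \<rho> \<sigma> (sqrt 3 * \<sigma>))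
      (optimal_contract \<rho> \<sigma> (sqrt 3 * \<sigma>)) \<delta>\<^sub>0"
    using optimal_contract_mem_AW_AP[OF assms] ex_feasible_identical_contracts by blast
  have payoff\<^sub>0: "spike_payoff \<rho> (optimal_contract \<rho> \<sigma> (sqrt 3 * \<sigma>)) = \<beta>"
    using assms by (simp add: optimal_contract_spike_payoff \<beta>_def)
  show ?thesis
    unfolding \<beta>_def[symmetric]
  proof
    assume "optimal \<rho> \<mu> \<sigma> tW tP \<delta>"
    then have "feasible \<rho> \<mu> \<sigma> tW tP \<delta>"
      and "objective \<rho> \<mu> \<sigma> tW tP \<delta> \<le> objective \<rho> \<mu> \<sigma> (optimal_contract \<rho> \<sigma> (sqrt 3 * \<sigma>))
             (optimal_contract \<rho> \<sigma> (sqrt 3 * \<sigma>)) \<delta>\<^sub>0"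
      using feasible\<^sub>0 unfolding optimal_def by blast+
    then show "feasible \<rho> \<mu> \<sigma> tW tP \<delta> \<and> spike_payoff \<rho> tW = \<beta>"
      using objective feasible\<^sub>0 payoff\<^sub>0 by simp
  next
    assume "feasible \<rho> \<mu> \<sigma> tW tP \<delta> \<and> spike_payoff \<rho> tW = \<beta>"
    then show "optimal \<rho> \<mu> \<sigma> tW tP \<delta>"
      unfolding optimal_def using objective by simp
  qed
qed

lemma ex_optimal_optimal_contract:
  assumes "\<sigma> > 0" "0 < \<rho>" "\<rho> < 2" "\<Delta> \<in> {sqrt 3 * \<sigma> * (2 - \<rho>) / 4 .. sqrt 3 * \<sigma>}"
  shows "\<exists>\<delta>. optimal \<rho> \<mu> \<sigma> (optimal_contract \<rho> \<sigma> \<Delta>) (optimal_contract \<rho> \<sigma> \<Delta>) \<delta>"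
proof -
  obtain \<delta> where "feasible \<rho> \<mu> \<sigma> (optimal_contract \<rho> \<sigma> \<Delta>) (optimal_contract \<rho> \<sigma> \<Delta>) \<delta>"
    using optimal_contract_mem_AW_AP[OF assms] ex_feasible_identical_contracts by blast
  moreover have "spike_payoff \<rho> (optimal_contract \<rho> \<sigma> \<Delta>) = optimal_spike_payoff \<rho> \<sigma>"
    using feasible_optimal_spike_payoff_iff[OF assms(1-3) calculation] assms(4) by blast
  ultimately show ?thesis
    using optimal_iff_optimal_spike_payoff[OF assms(1-3)] by blast
qed

lemma variance_change_optimal:
  assumes "\<sigma> > 0" "feasible \<rho> \<mu> \<sigma> tW tP \<delta>" "spike_payoff \<rho> tW = optimal_spike_payoff \<rho> \<sigma>"
  shows "var (unifM \<mu> \<sigma>) (PiW \<rho> \<mu> tW) - var (unifM \<mu> \<sigma>) (piW \<rho> \<mu>)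
           + (var (unifM \<mu> \<sigma>) (PiP \<rho> \<mu> tP \<delta>) - var (unifM \<mu> \<sigma>) (piP \<rho> \<mu>))
         = - (3 * \<sigma>\<^sup>2 / 8) * (1 / \<rho> - 1 / 2)\<^sup>2"
    (is "?change = _")
proof -
  have "?change = - (optimal_spike_payoff \<rho> \<sigma>)\<^sup>2 / 2"
    using variance_change_feasible[OF assms(1,2)] assms(3) by simp
  also have "\<dots> = - (3 * \<sigma>\<^sup>2 / 8) * (1 / \<rho> - 1 / 2)\<^sup>2"
    by (simp add: optimal_spike_payoff_def power2_eq_square field_simps)
  finally show ?thesis .
qed

theorem proposition5:
  fixes \<mu> \<sigma> \<rho> :: real
  assumes "\<mu> > 0" "\<sigma> > 0" "\<mu> \<ge> sqrt 3 * \<sigma>" "0 < \<rho>" "\<rho> < 1"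
  shows "(\<forall>tW tP \<delta>. optimal \<rho> \<mu> \<sigma> tW tP \<delta> \<longleftrightarrow>
            feasible \<rho> \<mu> \<sigma> tW tP \<delta> \<and>
            (\<exists>\<Delta>\<in>{sqrt 3 * \<sigma> * (2 - \<rho>) / 4 .. sqrt 3 * \<sigma>}.
               tW = (sqrt 3 * \<sigma> / (4 * \<rho> * \<Delta>) - sqrt 3 * \<sigma> / (8 * \<Delta>),
                     (1 / \<rho>) * ((2 * \<Delta> - sqrt 3 * \<sigma>) / (2 * \<Delta>)) + sqrt 3 * \<sigma> / (4 * \<Delta>),
                     \<Delta>) \<and>
               tP = tW))
       \<and> (\<forall>\<Delta>\<in>{sqrt 3 * \<sigma> * (2 - \<rho>) / 4 .. sqrt 3 * \<sigma>}. \<exists>\<delta>.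
            optimal \<rho> \<mu> \<sigma>
              (sqrt 3 * \<sigma> / (4 * \<rho> * \<Delta>) - sqrt 3 * \<sigma> / (8 * \<Delta>),
               (1 / \<rho>) * ((2 * \<Delta> - sqrt 3 * \<sigma>) / (2 * \<Delta>)) + sqrt 3 * \<sigma> / (4 * \<Delta>), \<Delta>)
              (sqrt 3 * \<sigma> / (4 * \<rho> * \<Delta>) - sqrt 3 * \<sigma> / (8 * \<Delta>),
               (1 / \<rho>) * ((2 * \<Delta> - sqrt 3 * \<sigma>) / (2 * \<Delta>)) + sqrt 3 * \<sigma> / (4 * \<Delta>), \<Delta>)
              \<delta>)
       \<and> (\<forall>tW tP \<delta>. optimal \<rho> \<mu> \<sigma> tW tP \<delta> \<longrightarrow>
            (var (unifM \<mu> \<sigma>) (PiW \<rho> \<mu> tW) - var (unifM \<mu> \<sigma>) (piW \<rho> \<mu>))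
            + (var (unifM \<mu> \<sigma>) (PiP \<rho> \<mu> tP \<delta>) - var (unifM \<mu> \<sigma>) (piP \<rho> \<mu>))
            = - (3 * \<sigma>\<^sup>2 / 8) * (1 / \<rho> - 1 / 2)\<^sup>2)
       \<and> - (3 * \<sigma>\<^sup>2 / 8) * (1 / \<rho> - 1 / 2)\<^sup>2 < 0"
proof -
  have "\<rho> < 2" using assms(5) by simp
  note optimal_iff = optimal_iff_optimal_spike_payoff[OF assms(2,4) this]
  note payoff_iff = feasible_optimal_spike_payoff_iff[OF assms(2,4) \<open>\<rho> < 2\<close>]
  have "1 / \<rho> - 1 / 2 \<noteq> 0"
    using assms(4,5) by (simp add: field_simps)
  then show ?thesis
    unfolding optimal_contract_def[symmetric]
    apply (intro conjI allI ballI impI)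
    subgoal for tW tP \<delta> using optimal_iff payoff_iff by blast
    subgoal for \<Delta> using ex_optimal_optimal_contract[OF assms(2,4) \<open>\<rho> < 2\<close>] by blast
    subgoal for tW tP \<delta>
      using optimal_iff variance_change_optimal[OF assms(2)] by blast
    subgoal using assms(2) by simp
    done
qed

end
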